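(* Let $\mathcal N(G,\pi,\mathbf p)$ be any feedforward network with shared weights and ReLU activations, and let $L$ be an objective depending on $\mathbf p$ only through the computed function $f_{\mathbf p}$. Consider the update rule $$p^{(t+1)}_{i} = p^{(t)}_{i} - \frac{\eta}{\kappa_{i}(\mathbf p^{(t)})} \frac{\partial L}{\partial p_{i}}(\mathbf p^{(t)}),\qquad \kappa_{i}(\mathbf p)=\frac{1}{2}\frac{\partial^2 \gamma^2_{\rm net}(\mathbf p)}{\partial p^2_{i}}.$$ This update is invariant to all feasible node-wise rescalings. Moreover, the simpler update rule obtained by using $\kappa^{(1)}_i(\mathbf p)$ in place of $\kappa_i(\mathbf p)$ is also invariant to all feasible node-wise rescalings.
   Context: A feedforward network with shared weights $\mathcal N(G,\pi,\mathbf p)$: $G=(V,E)$ is a directed acyclic graph with input nodes $V_{\rm in}$ and output nodes $V_{\rm out}$, $\mathbf p\in\mathbb R^m$, $\pi:E\to\{1,\dots,m\}$, edge $e$ has weight $w_e=p_{\pi(e)}$, and $E_i=\{e:\pi(e)=i\}$. Input nodes output the corresponding input coordinate; internal nodes compute $h_v=[\sum_{(u\to v)\in E}w_{u\to v}h_u]_+$ with $[z]_+=\max(z,0)$; output nodes compute $h_v=\sum_{(u\to v)\in E}w_{u\to v}h_u$; $f_{\mathbf p}$ is the resulting function. $\mathcal P$ is the set of directed paths $\zeta=(\zeta_0,\dots,\zeta_{\text{len}(\zeta)})$ from input to output nodes, and $\gamma^2_{\rm net}(\mathbf p)=\sum_{\zeta\in\mathcal P}\prod_{j=0}^{\text{len}(\zeta)-1}p^2_{\pi(\zeta_j\to\zeta_{j+1})}$.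 Also $\kappa^{(1)}_{i}(\mathbf p) = \sum_{e\in E_i}\sum_{\zeta \in \mathcal{P}} \mathbf 1_{e\in \zeta} \prod_{j:\, e\neq (\zeta_j\rightarrow \zeta_{j+1})} p^2_{\pi(\zeta_j\rightarrow \zeta_{j+1})}$. A node-wise rescaling is given by $\beta_v>0$ for internal nodes ($\beta_v=1$ for input and output nodes) and maps $w_{u\to v}\mapsto(\beta_v/\beta_u)w_{u\to v}$; it is feasible if edges sharing a parameter remain equal after the transformation, so it induces a transformation $\mathcal T$ of the parameter vector. An update rule $\mathcal A$ (mapping $\mathbf p^{(t)}$ to $\mathbf p^{(t+1)}$) is invariant to $\mathcal T$ if $f_{\mathcal A(\mathbf p)}=f_{\mathcal A(\mathcal T(\mathbf p))}$ for every $\mathbf p$. *)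

theory Defs
  imports "HOL-Analysis.Analysis"
begin

text \<open>Nodes have type 'v, parameters are indexed by a finite type 'p (so p :: 'p => real is a
  vector in R^m with m = CARD('p)); pi maps edges to parameter indices; the weight of
  edge e is p (pi e).\<close>

definition ff_net :: "'v set \<Rightarrow> 'v set \<Rightarrow> 'v set \<Rightarrow> ('v \<times> 'v) set \<Rightarrow> bool" where
  "ff_net V Vin Vout E \<longleftrightarrow> finite V \<and> E \<subseteq> V \<times> V \<and> acyclic E \<and>
     Vin \<subseteq> V \<and> Vout \<subseteq> V \<and> Vin \<inter> Vout = {}"

definition preds :: "('v \<times> 'v) set \<Rightarrow> 'v \<Rightarrow> 'v set" where
  "preds E v = {u. (u, v) \<in> E}"

definition node_eq :: "'v set \<Rightarrow> 'v set \<Rightarrow> 'v set \<Rightarrow> ('v \<times> 'v) set \<Rightarrow> ('v \<times> 'v \<Rightarrow> 'p)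
    \<Rightarrow> ('p \<Rightarrow> real) \<Rightarrow> ('v \<Rightarrow> real) \<Rightarrow> ('v \<Rightarrow> real) \<Rightarrow> 'v \<Rightarrow> real" where
  "node_eq V Vin Vout E \<pi> p x h v =
     (if v \<notin> V then 0
      else if v \<in> Vin then x v
      else (let s = (\<Sum>u\<in>preds E v. p (\<pi> (u, v)) * h u)
            in if v \<in> Vout then s else max s 0))"

text \<open>Node outputs h_v: the (unique, since G is a DAG) solution of the node equations.\<close>
definition node_val :: "'v set \<Rightarrow> 'v set \<Rightarrow> 'v set \<Rightarrow> ('v \<times> 'v) set \<Rightarrow> ('v \<times> 'v \<Rightarrow> 'p)
    \<Rightarrow> ('p \<Rightarrow> real) \<Rightarrow> ('v \<Rightarrow> real) \<Rightarrow> 'v \<Rightarrow> real" where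
  "node_val V Vin Vout E \<pi> p x = (THE h. \<forall>v. h v = node_eq V Vin Vout E \<pi> p x h v)"

text \<open>The computed function f_p: input x (only its values on Vin matter) to the vector of
  output-node values (set to 0 off Vout).\<close>
definition net_fun :: "'v set \<Rightarrow> 'v set \<Rightarrow> 'v set \<Rightarrow> ('v \<times> 'v) set \<Rightarrow> ('v \<times> 'v \<Rightarrow> 'p)
    \<Rightarrow> ('p \<Rightarrow> real) \<Rightarrow> ('v \<Rightarrow> real) \<Rightarrow> 'v \<Rightarrow> real" where
  "net_fun V Vin Vout E \<pi> p = (\<lambda>x v. if v \<in> Vout then node_val V Vin Vout E \<pi> p x v else 0)"

text \<open>Directed input-to-output paths, as node lists zeta_0 ... zeta_len (len = length - 1).\<close>
definition net_paths :: "'v set \<Rightarrow> 'v set \<Rightarrow> ('v \<times> 'v) set \<Rightarrow> 'v list set" where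
  "net_paths Vin Vout E = {\<zeta>. \<zeta> \<noteq> [] \<and> hd \<zeta> \<in> Vin \<and> last \<zeta> \<in> Vout \<and>
      (\<forall>j. Suc j < length \<zeta> \<longrightarrow> (\<zeta> ! j, \<zeta> ! Suc j) \<in> E)}"

definition path_edge :: "'v list \<Rightarrow> nat \<Rightarrow> 'v \<times> 'v" where
  "path_edge \<zeta> j = (\<zeta> ! j, \<zeta> ! Suc j)"

definition gamma2 :: "'v set \<Rightarrow> 'v set \<Rightarrow> ('v \<times> 'v) set \<Rightarrow> ('v \<times> 'v \<Rightarrow> 'p)
    \<Rightarrow> ('p \<Rightarrow> real) \<Rightarrow> real" where
  "gamma2 Vin Vout E \<pi> p =
     (\<Sum>\<zeta>\<in>net_paths Vin Vout E. \<Prod>j<length \<zeta> - 1. (p (\<pi> (path_edge \<zeta> j)))\<^sup>2)"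

definition kappa :: "'v set \<Rightarrow> 'v set \<Rightarrow> ('v \<times> 'v) set \<Rightarrow> ('v \<times> 'v \<Rightarrow> 'p)
    \<Rightarrow> 'p \<Rightarrow> ('p \<Rightarrow> real) \<Rightarrow> real" where
  "kappa Vin Vout E \<pi> i p =
     deriv (deriv (\<lambda>t. gamma2 Vin Vout E \<pi> (p(i := t)))) (p i) / 2"

definition kappa1 :: "'v set \<Rightarrow> 'v set \<Rightarrow> ('v \<times> 'v) set \<Rightarrow> ('v \<times> 'v \<Rightarrow> 'p)
    \<Rightarrow> 'p \<Rightarrow> ('p \<Rightarrow> real) \<Rightarrow> real" where
  "kappa1 Vin Vout E \<pi> i p =
     (\<Sum>e\<in>{e\<in>E. \<pi> e = i}. \<Sum>\<zeta>\<in>net_paths Vin Vout E.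
        (if \<exists>j<length \<zeta> - 1. path_edge \<zeta> j = e then 1 else 0) *
        (\<Prod>j\<in>{j. j < length \<zeta> - 1 \<and> e \<noteq> path_edge \<zeta> j}. (p (\<pi> (path_edge \<zeta> j)))\<^sup>2))"

definition partial :: "(('p \<Rightarrow> real) \<Rightarrow> real) \<Rightarrow> 'p \<Rightarrow> ('p \<Rightarrow> real) \<Rightarrow> real" where
  "partial L i p = deriv (\<lambda>t. L (p(i := t))) (p i)"

definition scaled_update :: "('p \<Rightarrow> ('p \<Rightarrow> real) \<Rightarrow> real) \<Rightarrow> (('p \<Rightarrow> real) \<Rightarrow> real) \<Rightarrow> real
    \<Rightarrow> ('p \<Rightarrow> real) \<Rightarrow> ('p \<Rightarrow> real)" where
  "scaled_update k L \<eta> p = (\<lambda>i. p i - \<eta> / k i p * partial L i p)"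

text \<open>Node-wise rescaling beta: positive on internal nodes, 1 on input/output nodes;
  feasible if edges sharing a parameter are multiplied by the same factor.\<close>
definition feasible_rescaling :: "'v set \<Rightarrow> 'v set \<Rightarrow> 'v set \<Rightarrow> ('v \<times> 'v) set
    \<Rightarrow> ('v \<times> 'v \<Rightarrow> 'p) \<Rightarrow> ('v \<Rightarrow> real) \<Rightarrow> bool" where
  "feasible_rescaling V Vin Vout E \<pi> \<beta> \<longleftrightarrow>
     (\<forall>v\<in>V - Vin - Vout. \<beta> v > 0) \<and> (\<forall>v\<in>Vin \<union> Vout. \<beta> v = 1) \<and>
     (\<forall>e1\<in>E. \<forall>e2\<in>E. \<pi> e1 = \<pi> e2 \<longrightarrow>
        \<beta> (snd e1) / \<beta> (fst e1) = \<beta> (snd e2) / \<beta> (fst e2))"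

definition rescale_params :: "('v \<times> 'v) set \<Rightarrow> ('v \<times> 'v \<Rightarrow> 'p) \<Rightarrow> ('v \<Rightarrow> real)
    \<Rightarrow> ('p \<Rightarrow> real) \<Rightarrow> ('p \<Rightarrow> real)" where
  "rescale_params E \<pi> \<beta> p = (\<lambda>i. if \<exists>e\<in>E. \<pi> e = i
      then (let e = (SOME e. e \<in> E \<and> \<pi> e = i) in \<beta> (snd e) / \<beta> (fst e)) * p i
      else p i)"

definition invariant_to :: "'v set \<Rightarrow> 'v set \<Rightarrow> 'v set \<Rightarrow> ('v \<times> 'v) set \<Rightarrow> ('v \<times> 'v \<Rightarrow> 'p)
    \<Rightarrow> (('p \<Rightarrow> real) \<Rightarrow> ('p \<Rightarrow> real)) \<Rightarrow> (('p \<Rightarrow> real) \<Rightarrow> ('p \<Rightarrow> real)) \<Rightarrow> bool" where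
  "invariant_to V Vin Vout E \<pi> A T \<longleftrightarrow>
     (\<forall>p. net_fun V Vin Vout E \<pi> (A p) = net_fun V Vin Vout E \<pi> (A (T p)))"

end

theory Submission
  imports Defs
begin

text \<open>A feasible rescaling multiplies every parameter by a positive factor \<open>c\<^sub>i\<close>, and along
  every input-output path these factors telescope to \<open>\<beta>\<^sub>o\<^sub>u\<^sub>t / \<beta>\<^sub>i\<^sub>n = 1\<close>. Hence, by positive
  homogeneity of the ReLU, the rescaled network computes the same function, and \<open>\<gamma>\<^sup>2\<^sub>n\<^sub>e\<^sub>t\<close> is
  unchanged. Since \<open>L\<close> factors through \<open>f\<^sub>p\<close>, the chain rule gives
  \<open>\<partial>L/\<partial>p\<^sub>i (T p) = \<partial>L/\<partial>p\<^sub>i (p) / c\<^sub>i\<close>, while \<open>\<kappa>\<^sub>i\<close> and \<open>\<kappa>\<^sup>(\<^sup>1\<^sup>)\<^sub>i\<close> scale like \<open>1/c\<^sub>i\<^sup>2\<close>. So the update of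
  \<open>T p\<close> is exactly the rescaling of the update of \<open>p\<close>, and both compute the same function.\<close>

lemma node_eq_cong:
  assumes "\<And>u. (u, v) \<in> E \<Longrightarrow> h u = g u"
  shows "node_eq V Vin Vout E \<pi> p x h v = node_eq V Vin Vout E \<pi> p x g v"
proof -
  have "(\<Sum>u\<in>preds E v. p (\<pi> (u, v)) * h u) = (\<Sum>u\<in>preds E v. p (\<pi> (u, v)) * g u)"
    by (rule sum.cong) (auto simp: preds_def assms)
  then show ?thesis by (simp add: node_eq_def)
qed

lemma ff_net_wf:
  assumes "ff_net V Vin Vout E" shows "wf E"
proof -
  have "finite E" using assms unfolding ff_net_def by (meson finite_SigmaI finite_subset)
  then show ?thesis using assms finite_acyclic_wf unfolding ff_net_def by blast
qed

lemma node_eq_unique_solution: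
  assumes "ff_net V Vin Vout E"
  shows "\<exists>!h. \<forall>v. h v = node_eq V Vin Vout E \<pi> p x h v"
proof -
  let ?F = "node_eq V Vin Vout E \<pi> p x"
  have wf: "wf E" using ff_net_wf[OF assms] .
  have "adm_wf E ?F"
    unfolding adm_wf_def by (auto intro: node_eq_cong)
  then have "\<forall>v. wfrec E ?F v = ?F (wfrec E ?F) v"
    using wfrec_fixpoint[OF wf] by metis
  moreover have "h = g" if h: "\<forall>v. h v = ?F h v" and g: "\<forall>v. g v = ?F g v" for h g
  proof
    fix v show "h v = g v"
    proof (induction v rule: wf_induct[OF wf])
      case (1 v)
      then have "?F h v = ?F g v" by (intro node_eq_cong) auto
      then show ?case using h g by metis
    qed
  qed
  ultimately show ?thesis by blast
qed

lemma node_val_eq: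
  "ff_net V Vin Vout E \<Longrightarrow>
     node_val V Vin Vout E \<pi> p x v = node_eq V Vin Vout E \<pi> p x (node_val V Vin Vout E \<pi> p x) v"
  unfolding node_val_def using theI'[OF node_eq_unique_solution, of V Vin Vout E \<pi> p x] by simp

lemma node_val_eqI:
  "ff_net V Vin Vout E \<Longrightarrow> (\<And>v. h v = node_eq V Vin Vout E \<pi> p x h v) \<Longrightarrow>
     node_val V Vin Vout E \<pi> p x = h"
  unfolding node_val_def by (rule the1_equality[OF node_eq_unique_solution]) auto

lemma walk_trancl:
  assumes walk: "\<forall>j. Suc j < length \<zeta> \<longrightarrow> (\<zeta> ! j, \<zeta> ! Suc j) \<in> E"
  shows "i < k \<Longrightarrow> k < length \<zeta> \<Longrightarrow> (\<zeta> ! i, \<zeta> ! k) \<in> E\<^sup>+"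
proof (induction k)
  case (Suc k)
  have "(\<zeta> ! k, \<zeta> ! Suc k) \<in> E" using walk Suc.prems by blast
  then show ?case
    using Suc by (cases "i = k") (auto intro: trancl_into_trancl)
qed simp

lemma acyclic_walk_distinct:
  assumes "acyclic E" and "\<forall>j. Suc j < length \<zeta> \<longrightarrow> (\<zeta> ! j, \<zeta> ! Suc j) \<in> E"
  shows "distinct \<zeta>"
proof -
  have "\<zeta> ! i \<noteq> \<zeta> ! k" if "i < k" "k < length \<zeta>" for i k
    using walk_trancl[OF assms(2) that] assms(1) by (auto simp: acyclic_def)
  then show ?thesis
    unfolding distinct_conv_nth by (metis linorder_neq_iff)
qed

lemma net_paths_distinct:
  "ff_net V Vin Vout E \<Longrightarrow> \<zeta> \<in> net_paths Vin Vout E \<Longrightarrow> distinct \<zeta>"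
  unfolding ff_net_def net_paths_def by (blast intro: acyclic_walk_distinct)

lemma net_paths_subset:
  assumes net: "ff_net V Vin Vout E" and \<zeta>: "\<zeta> \<in> net_paths Vin Vout E"
  shows "set \<zeta> \<subseteq> V"
proof
  fix v assume "v \<in> set \<zeta>"
  then obtain k where k: "k < length \<zeta>" "v = \<zeta> ! k" by (auto simp: in_set_conv_nth)
  show "v \<in> V"
  proof (cases k)
    case 0
    then show ?thesis using k \<zeta> net unfolding net_paths_def ff_net_def by (auto simp: hd_conv_nth)
  next
    case (Suc j)
    then have "(\<zeta> ! j, v) \<in> E" using k \<zeta> unfolding net_paths_def by auto
    then show ?thesis using net unfolding ff_net_def by auto
  qed
qed

lemma path_edge_inj:
  assumes "ff_net V Vin Vout E" "\<zeta> \<in> net_paths Vin Vout E"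
    and "j1 < length \<zeta> - 1" "j2 < length \<zeta> - 1" "path_edge \<zeta> j1 = path_edge \<zeta> j2"
  shows "j1 = j2"
  using assms net_paths_distinct[OF assms(1,2)] by (simp add: path_edge_def nth_eq_iff_index_eq)

lemma real_polynomial_function_deriv:
  assumes "real_polynomial_function f"
  shows "real_polynomial_function (deriv f)" and "f field_differentiable at x"
proof -
  obtain f' where f': "real_polynomial_function f'" "\<And>x. (f has_real_derivative f' x) (at x)"
    using has_real_derivative_polynomial_function[OF assms] by blast
  then have "deriv f = f'" by (simp add: DERIV_imp_deriv fun_eq_iff)
  then show "real_polynomial_function (deriv f)" using f'(1) by simp
  show "f field_differentiable at x" using f'(2) field_differentiable_def by blast
qed

lemma deriv2_compose_linear:
  fixes f :: "real \<Rightarrow> real"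
  assumes "real_polynomial_function f"
  shows "deriv (deriv (\<lambda>w. f (c * w))) z = c\<^sup>2 * deriv (deriv f) (c * z)"
proof -
  have f: "f field_differentiable at x" and f': "deriv f field_differentiable at x" for x
    using real_polynomial_function_deriv[OF assms]
      real_polynomial_function_deriv[OF real_polynomial_function_deriv(1)[OF assms]] by blast+
  have "deriv (\<lambda>w. f (c * w)) = (\<lambda>w. c * deriv f (c * w))"
    using deriv_compose_linear[OF f] by blast
  moreover have "(\<lambda>w. deriv f (c * w)) field_differentiable at z"
    using field_differentiable_compose[OF _ f', of "\<lambda>w. c * w"]
    by (auto simp: o_def intro: field_differentiable_mult field_differentiable_ident field_differentiable_const)
  ultimately show ?thesis
    using deriv_compose_linear[OF f'] by (simp add: power2_eq_square)
qed

lemma gamma2_coordinate_polynomial: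
  "real_polynomial_function (\<lambda>t. gamma2 Vin Vout E \<pi> (p(i := t)))"
proof (cases "finite (net_paths Vin Vout E)")
  case True
  have "real_polynomial_function (\<lambda>t. (p(i := t)) k)" for k
    by (cases "k = i") (auto simp: real_polynomial_function_eq)
  then show ?thesis
    unfolding gamma2_def using True
    by (intro real_polynomial_function_sum real_polynomial_function_prod
        real_polynomial_function_power) auto
qed (simp add: gamma2_def real_polynomial_function_eq)

lemma fun_upd_rescaled:
  fixes c :: "'p \<Rightarrow> real" assumes "c i \<noteq> 0"
  shows "(\<lambda>j. c j * p j)(i := t) = (\<lambda>j. c j * (p(i := inverse (c i) * t)) j)"
  using assms by (auto simp: fun_eq_iff)

lemma partial_rescaled:
  fixes c :: "'p \<Rightarrow> real"
  assumes inv: "\<And>q. L (\<lambda>j. c j * q j) = L q" and c: "c i \<noteq> 0"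
    and diff: "(\<lambda>t. L (p(i := t))) differentiable (at (p i))"
  shows "partial L i (\<lambda>j. c j * p j) = partial L i p / c i"
proof -
  define l where "l = (\<lambda>s. L (p(i := s)))"
  have cancel: "inverse (c i) * (c i * p i) = p i" using c by simp
  have eq: "(\<lambda>t. L ((\<lambda>j. c j * p j)(i := t))) = (\<lambda>t. l (inverse (c i) * t))"
    unfolding fun_upd_rescaled[where c=c, OF c] l_def inv ..
  have "l field_differentiable at (inverse (c i) * (c i * p i))"
    using diff unfolding l_def cancel
    by (simp add: DERIV_deriv_iff_real_differentiable[symmetric] DERIV_deriv_iff_field_differentiable)
  then have "deriv (\<lambda>t. l (inverse (c i) * t)) (c i * p i) = inverse (c i) * deriv l (p i)"
    by (subst deriv_compose_linear) (simp_all only: cancel)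
  then show ?thesis
    unfolding partial_def eq by (simp add: l_def divide_inverse mult.commute)
qed

lemma second_partial_rescaled:
  fixes c :: "'p \<Rightarrow> real"
  assumes inv: "\<And>q. G (\<lambda>j. c j * q j) = G q" and c: "c i \<noteq> 0"
    and poly: "real_polynomial_function (\<lambda>t. G (p(i := t)))"
  shows "deriv (deriv (\<lambda>t. G ((\<lambda>j. c j * p j)(i := t)))) (c i * p i)
       = deriv (deriv (\<lambda>t. G (p(i := t)))) (p i) / (c i)\<^sup>2"
proof -
  have cancel: "inverse (c i) * (c i * p i) = p i" using c by simp
  have "(\<lambda>t. G ((\<lambda>j. c j * p j)(i := t))) = (\<lambda>t. G (p(i := inverse (c i) * t)))"
    unfolding fun_upd_rescaled[where c=c, OF c] inv ..
  then show ?thesis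
    using deriv2_compose_linear[OF poly, of "inverse (c i)" "c i * p i"]
    unfolding cancel by (simp add: power_inverse divide_inverse)
qed

lemma scaled_update_rescaled:
  fixes c :: "'p \<Rightarrow> real"
  assumes c: "\<And>i. c i \<noteq> 0"
    and K: "\<And>i p. K i (\<lambda>j. c j * p j) = K i p / (c i)\<^sup>2"
    and P: "\<And>i p. partial L i (\<lambda>j. c j * p j) = partial L i p / c i"
  shows "scaled_update K L \<eta> (\<lambda>j. c j * p j) = (\<lambda>j. c j * scaled_update K L \<eta> p j)"
proof
  fix i
  show "scaled_update K L \<eta> (\<lambda>j. c j * p j) i = c i * scaled_update K L \<eta> p i"
    unfolding scaled_update_def K P
    using c[of i] by (cases "K i p = 0") (simp_all add: field_simps power2_eq_square)
qed

locale network_rescaling =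
  fixes V Vin Vout :: "'v set" and E :: "('v \<times> 'v) set" and \<pi> :: "'v \<times> 'v \<Rightarrow> 'p"
    and \<beta> :: "'v \<Rightarrow> real" and c :: "'p \<Rightarrow> real"
  assumes net: "ff_net V Vin Vout E"
    and factor_edge: "\<And>e. e \<in> E \<Longrightarrow> c (\<pi> e) = \<beta> (snd e) / \<beta> (fst e)"
    and node_factor_pos: "\<And>v. v \<in> V \<Longrightarrow> 0 < \<beta> v"
    and node_factor_boundary: "\<And>v. v \<in> Vin \<union> Vout \<Longrightarrow> \<beta> v = 1"
    and factor_pos: "\<And>i. 0 < c i"
begin

lemma node_eq_rescaled:
  "node_eq V Vin Vout E \<pi> (\<lambda>i. c i * q i) x (\<lambda>u. \<beta> u * h u) v
     = \<beta> v * node_eq V Vin Vout E \<pi> q x h v"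
proof -
  have sum: "(\<Sum>u\<in>preds E v. c (\<pi> (u, v)) * q (\<pi> (u, v)) * (\<beta> u * h u))
      = \<beta> v * (\<Sum>u\<in>preds E v. q (\<pi> (u, v)) * h u)"
    unfolding sum_distrib_left
  proof (rule sum.cong)
    fix u assume "u \<in> preds E v"
    then have uv: "(u, v) \<in> E" by (simp add: preds_def)
    then have "0 < \<beta> u" using net node_factor_pos unfolding ff_net_def by auto
    then show "c (\<pi> (u, v)) * q (\<pi> (u, v)) * (\<beta> u * h u) = \<beta> v * (q (\<pi> (u, v)) * h u)"
      using factor_edge[OF uv] by simp
  qed simp
  have "max (\<beta> v * s) 0 = \<beta> v * max s 0" if "v \<in> V" for s
    using node_factor_pos[OF that] by (simp add: max_def mult_le_0_iff)
  then show ?thesis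
    using sum node_factor_boundary by (auto simp: node_eq_def Let_def)
qed

text \<open>Positive homogeneity of the ReLU: the rescaled parameters produce the node values
  \<open>\<beta>\<^sub>v h\<^sub>v\<close>, which agree with \<open>h\<^sub>v\<close> on the output nodes.\<close>
lemma net_fun_rescaled:
  "net_fun V Vin Vout E \<pi> (\<lambda>i. c i * q i) = net_fun V Vin Vout E \<pi> q"
proof (intro ext)
  fix x w
  have "node_val V Vin Vout E \<pi> (\<lambda>i. c i * q i) x = (\<lambda>v. \<beta> v * node_val V Vin Vout E \<pi> q x v)"
    by (rule node_val_eqI[OF net])
      (simp only: node_eq_rescaled node_val_eq[OF net, symmetric])
  then show "net_fun V Vin Vout E \<pi> (\<lambda>i. c i * q i) x w = net_fun V Vin Vout E \<pi> q x w"
    using node_factor_boundary by (simp add: net_fun_def)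
qed

lemma path_factors_cancel:
  assumes \<zeta>: "\<zeta> \<in> net_paths Vin Vout E"
  shows "(\<Prod>j<length \<zeta> - 1. c (\<pi> (path_edge \<zeta> j))) = 1"
proof -
  let ?n = "length \<zeta> - 1"
  have ne: "\<zeta> \<noteq> []" and ends: "\<zeta> ! 0 \<in> Vin" "\<zeta> ! ?n \<in> Vout"
    using \<zeta> by (auto simp: net_paths_def hd_conv_nth last_conv_nth)
  have "(\<Prod>j<?n. c (\<pi> (path_edge \<zeta> j))) = (\<Prod>j<?n. \<beta> (\<zeta> ! Suc j) / \<beta> (\<zeta> ! j))"
    using \<zeta> by (intro prod.cong) (auto simp: net_paths_def path_edge_def factor_edge)
  also have "\<dots> = \<beta> (\<zeta> ! ?n) / \<beta> (\<zeta> ! 0)"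
  proof (rule prod_lessThan_telescope)
    fix k assume "k \<le> ?n"
    then have "k < length \<zeta>" using ne by (cases \<zeta>) auto
    then have "\<zeta> ! k \<in> V" using net_paths_subset[OF net \<zeta>] nth_mem by blast
    then show "\<beta> (\<zeta> ! k) \<noteq> 0" using node_factor_pos by fastforce
  qed
  also have "\<dots> = 1" using ends node_factor_boundary by simp
  finally show ?thesis .
qed

lemma gamma2_rescaled: "gamma2 Vin Vout E \<pi> (\<lambda>j. c j * q j) = gamma2 Vin Vout E \<pi> q"
  unfolding gamma2_def
proof (rule sum.cong)
  fix \<zeta> assume \<zeta>: "\<zeta> \<in> net_paths Vin Vout E"
  have "(\<Prod>j<length \<zeta> - 1. (c (\<pi> (path_edge \<zeta> j)) * q (\<pi> (path_edge \<zeta> j)))\<^sup>2)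
     = (\<Prod>j<length \<zeta> - 1. c (\<pi> (path_edge \<zeta> j)))\<^sup>2 * (\<Prod>j<length \<zeta> - 1. (q (\<pi> (path_edge \<zeta> j)))\<^sup>2)"
    by (simp add: power_mult_distrib prod.distrib prod_power_distrib)
  then show "(\<Prod>j<length \<zeta> - 1. (c (\<pi> (path_edge \<zeta> j)) * q (\<pi> (path_edge \<zeta> j)))\<^sup>2)
     = (\<Prod>j<length \<zeta> - 1. (q (\<pi> (path_edge \<zeta> j)))\<^sup>2)"
    using path_factors_cancel[OF \<zeta>] by simp
qed simp

lemma kappa_rescaled:
  "kappa Vin Vout E \<pi> i (\<lambda>j. c j * p j) = kappa Vin Vout E \<pi> i p / (c i)\<^sup>2"
  using second_partial_rescaled[where G="gamma2 Vin Vout E \<pi>" and c=c and i=i and p=p,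
      OF gamma2_rescaled _ gamma2_coordinate_polynomial] factor_pos[of i]
  by (simp add: kappa_def)

lemma path_factors_except:
  assumes \<zeta>: "\<zeta> \<in> net_paths Vin Vout E" and j0: "j0 < length \<zeta> - 1"
  shows "(\<Prod>j\<in>{..<length \<zeta> - 1} - {j0}. c (\<pi> (path_edge \<zeta> j))) = 1 / c (\<pi> (path_edge \<zeta> j0))"
proof -
  have "(\<Prod>j<length \<zeta> - 1. c (\<pi> (path_edge \<zeta> j)))
      = c (\<pi> (path_edge \<zeta> j0)) * (\<Prod>j\<in>{..<length \<zeta> - 1} - {j0}. c (\<pi> (path_edge \<zeta> j)))"
    by (rule prod.remove) (use j0 in auto)
  then have "c (\<pi> (path_edge \<zeta> j0)) * (\<Prod>j\<in>{..<length \<zeta> - 1} - {j0}. c (\<pi> (path_edge \<zeta> j))) = 1"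
    using path_factors_cancel[OF \<zeta>] by simp
  then show ?thesis
    using factor_pos[of "\<pi> (path_edge \<zeta> j0)"] by (simp add: eq_divide_eq mult.commute)
qed

lemma kappa1_rescaled:
  "kappa1 Vin Vout E \<pi> i (\<lambda>j. c j * p j) = kappa1 Vin Vout E \<pi> i p / (c i)\<^sup>2"
  unfolding kappa1_def sum_divide_distrib
proof (intro sum.cong refl)
  fix e \<zeta> assume e: "e \<in> {e \<in> E. \<pi> e = i}" and \<zeta>: "\<zeta> \<in> net_paths Vin Vout E"
  let ?n = "length \<zeta> - 1"
  let ?S = "{j. j < ?n \<and> e \<noteq> path_edge \<zeta> j}"
  let ?c = "\<lambda>j. c (\<pi> (path_edge \<zeta> j))" and ?q = "\<lambda>j. (p (\<pi> (path_edge \<zeta> j)))\<^sup>2"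
  show "(if \<exists>j<?n. path_edge \<zeta> j = e then 1 else 0) * (\<Prod>j\<in>?S. (?c j * p (\<pi> (path_edge \<zeta> j)))\<^sup>2)
      = (if \<exists>j<?n. path_edge \<zeta> j = e then 1 else 0) * (\<Prod>j\<in>?S. ?q j) / (c i)\<^sup>2"
  proof (cases "\<exists>j<?n. path_edge \<zeta> j = e")
    case True
    then obtain j0 where j0: "j0 < ?n" "path_edge \<zeta> j0 = e" by blast
    then have "?S = {..<?n} - {j0}"
      using path_edge_inj[OF net \<zeta>] by auto
    then have "(\<Prod>j\<in>?S. ?c j) = 1 / c i"
      using path_factors_except[OF \<zeta> j0(1)] j0(2) e by simp
    moreover have "(\<Prod>j\<in>?S. (?c j * p (\<pi> (path_edge \<zeta> j)))\<^sup>2) = (\<Prod>j\<in>?S. ?c j)\<^sup>2 * (\<Prod>j\<in>?S. ?q j)"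
      by (simp add: power_mult_distrib prod.distrib prod_power_distrib)
    ultimately show ?thesis using True by (simp add: power_divide)
  qed auto
qed

lemma scaled_update_invariant:
  assumes L_through_f: "\<And>p q. net_fun V Vin Vout E \<pi> p = net_fun V Vin Vout E \<pi> q \<Longrightarrow> L p = L q"
    and L_diff: "\<And>p i. (\<lambda>t. L (p(i := t))) differentiable (at (p i))"
    and K: "\<And>i p. K i (\<lambda>j. c j * p j) = K i p / (c i)\<^sup>2"
  shows "invariant_to V Vin Vout E \<pi> (scaled_update K L \<eta>) (\<lambda>p j. c j * p j)"
proof -
  have c: "c i \<noteq> 0" for i using factor_pos[of i] by simp
  have "partial L i (\<lambda>j. c j * p j) = partial L i p / c i" for i p
    by (rule partial_rescaled[OF L_through_f[OF net_fun_rescaled] c L_diff])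
  then have "scaled_update K L \<eta> (\<lambda>j. c j * p j) = (\<lambda>j. c j * scaled_update K L \<eta> p j)" for p
    by (rule scaled_update_rescaled[where c=c and K=K, OF c K])
  then show ?thesis
    by (simp add: invariant_to_def net_fun_rescaled)
qed

end

definition rescale_factor :: "('v \<times> 'v) set \<Rightarrow> ('v \<times> 'v \<Rightarrow> 'p) \<Rightarrow> ('v \<Rightarrow> real) \<Rightarrow> 'p \<Rightarrow> real" where
  "rescale_factor E \<pi> \<beta> i = (if \<exists>e\<in>E. \<pi> e = i
      then (let e = (SOME e. e \<in> E \<and> \<pi> e = i) in \<beta> (snd e) / \<beta> (fst e)) else 1)"

lemma rescale_params_eq: "rescale_params E \<pi> \<beta> p = (\<lambda>i. rescale_factor E \<pi> \<beta> i * p i)"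
  by (auto simp: rescale_params_def rescale_factor_def fun_eq_iff)

lemma rescale_factor_edge:
  assumes feas: "feasible_rescaling V Vin Vout E \<pi> \<beta>" and e: "e \<in> E"
  shows "rescale_factor E \<pi> \<beta> (\<pi> e) = \<beta> (snd e) / \<beta> (fst e)"
proof -
  define e' where "e' = (SOME e'. e' \<in> E \<and> \<pi> e' = \<pi> e)"
  have "e' \<in> E \<and> \<pi> e' = \<pi> e"
    unfolding e'_def by (rule someI_ex) (use e in blast)
  then have "\<beta> (snd e') / \<beta> (fst e') = \<beta> (snd e) / \<beta> (fst e)"
    using feas e unfolding feasible_rescaling_def by blast
  then show ?thesis
    using e by (auto simp: rescale_factor_def e'_def[symmetric])
qed

lemma feasible_rescaling_network_rescaling:
  assumes net: "ff_net V Vin Vout E" and feas: "feasible_rescaling V Vin Vout E \<pi> \<beta>"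
  shows "network_rescaling V Vin Vout E \<pi> \<beta> (rescale_factor E \<pi> \<beta>)"
proof
  show node_pos: "0 < \<beta> v" if "v \<in> V" for v
    using feas that unfolding feasible_rescaling_def by (cases "v \<in> Vin \<union> Vout") auto
  show "rescale_factor E \<pi> \<beta> (\<pi> e) = \<beta> (snd e) / \<beta> (fst e)" if "e \<in> E" for e
    using rescale_factor_edge[OF feas that] .
  show "0 < rescale_factor E \<pi> \<beta> i" for i
  proof (cases "\<exists>e\<in>E. \<pi> e = i")
    case True
    then obtain e where e: "e \<in> E" "\<pi> e = i" by blast
    then have "fst e \<in> V" "snd e \<in> V" using net unfolding ff_net_def by auto
    then show ?thesis using rescale_factor_edge[OF feas e(1)] e node_pos by auto
  qed (simp add: rescale_factor_def)
qed (use net feas in \<open>auto simp: feasible_rescaling_def\<close>)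

theorem theorem2:
  fixes V Vin Vout :: "'v set" and E :: "('v \<times> 'v) set" and \<pi> :: "'v \<times> 'v \<Rightarrow> 'p::finite"
    and L :: "('p \<Rightarrow> real) \<Rightarrow> real" and \<eta> :: real
  assumes net: "ff_net V Vin Vout E"
    and L_through_f: "\<And>p q. net_fun V Vin Vout E \<pi> p = net_fun V Vin Vout E \<pi> q \<Longrightarrow> L p = L q"
    and L_diff: "\<And>p i. (\<lambda>t. L (p(i := t))) differentiable (at (p i))"
  shows "\<forall>\<beta>. feasible_rescaling V Vin Vout E \<pi> \<beta> \<longrightarrow>
           invariant_to V Vin Vout E \<pi> (scaled_update (kappa Vin Vout E \<pi>) L \<eta>)
             (rescale_params E \<pi> \<beta>) \<and>
           invariant_to V Vin Vout E \<pi> (scaled_update (kappa1 Vin Vout E \<pi>) L \<eta>)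
             (rescale_params E \<pi> \<beta>)"
proof (intro allI impI)
  fix \<beta> assume "feasible_rescaling V Vin Vout E \<pi> \<beta>"
  then interpret network_rescaling V Vin Vout E \<pi> \<beta> "rescale_factor E \<pi> \<beta>"
    using feasible_rescaling_network_rescaling net by blast
  have T: "rescale_params E \<pi> \<beta> = (\<lambda>p j. rescale_factor E \<pi> \<beta> j * p j)"
    using rescale_params_eq by blast
  show "invariant_to V Vin Vout E \<pi> (scaled_update (kappa Vin Vout E \<pi>) L \<eta>) (rescale_params E \<pi> \<beta>) \<and>
        invariant_to V Vin Vout E \<pi> (scaled_update (kappa1 Vin Vout E \<pi>) L \<eta>) (rescale_params E \<pi> \<beta>)"
    unfolding T using scaled_update_invariant[where K="kappa Vin Vout E \<pi>", OF L_through_f L_diff kappa_rescaled]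
      scaled_update_invariant[where K="kappa1 Vin Vout E \<pi>", OF L_through_f L_diff kappa1_rescaled] by blast
qed

end
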